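(* Let $\mathscr N$ be a chemical reaction network. Let $p\ge2$ be the length of its finest independent decomposition and $q\ge2$ the length of its finest incidence independent decomposition. Then the number of independent decompositions of $\mathscr N$ is the Bell number $B_p$, and the number of incidence independent decompositions of $\mathscr N$ is $B_q$. Here the Bell numbers are defined by $B_0=1$ and $$B_p=\sum_{k=1}^{p}\binom{p-1}{k-1}B_{p-k},$$ i.e., $B_p$ is the number of partitions of a $p$-element set.
   Context: A chemical reaction network (CRN) $\mathscr N=(\mathscr S,\mathscr C,\mathscr R)$ consists of: - a finite set $\mathscr S$ of species; - a finite set $\mathscr C\subseteq\mathbb R^{\mathscr S}_{\ge0}$ of complexes; - a set $\mathscr R\subseteq\mathscr C\times\mathscr C$ of reactions, with no reaction $y\to y$ and every complex occurring in some reaction. A decomposition of $\mathscr N$ is the set of subnetworks $\mathscr N_1,\ldots,\mathscr N_k$ induced by a partition $\{\mathscr R_1,\ldots,\mathscr R_k\}$ of $\mathscr R$. Its length is $k$. The trivial decomposition ($k=1$) is counted. Let $S$ be the stoichiometric subspace $\operatorname{span}\{y'-y: y\to y'\in\mathscr R\}$, and $S_i$ the analogous subspace of $\mathscr N_i$. The decomposition is independent if $S=S_1\oplus\cdots\oplus S_k$. The decomposition is incidence independent if $n-l=\sum_i(n_i-l_i)$, where $n$ and $l$ are the numbers of complexes and of linkage classes (connected components of the underlying undirected graph) of $\mathscr N$, and $n_i$ and $l_i$ are those of $\mathscr N_i$. The finest independent (resp. incidence independent) decomposition is the unique independent (resp. incidence independent) decomposition that has no independent (resp. incidence independent) proper refinement.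 A refinement of a decomposition induced by $\{\mathscr R_i\}$ is one induced by a partition each of whose blocks lies in some $\mathscr R_i$. *)

theory Defs
  imports "HOL-Analysis.Analysis"
begin

function Bell :: "nat \<Rightarrow> nat" where
  "Bell 0 = 1"
| "Bell (Suc n) = (\<Sum>k\<in>{1..Suc n}. (n choose (k - 1)) * Bell (Suc n - k))"
  by pat_completeness auto
termination by (relation "Wellfounded.measure id") auto

text \<open>Complexes are vectors in R^S, with S a finite type of species.
  A reaction is a pair (y, y') meaning y \<rightarrow> y'.\<close>
type_synonym 's complex = "real ^ 's"
type_synonym 's reaction = "'s complex \<times> 's complex"

text \<open>A CRN is determined by its reaction set; the complexes are those occurring
  in reactions.\<close>
definition is_crn :: "('s::finite) reaction set \<Rightarrow> bool" where
  "is_crn R \<longleftrightarrow> finite R \<and> (\<forall>(y, y')\<in>R. y \<noteq> y')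
     \<and> (\<forall>(y, y')\<in>R. (\<forall>i. y $ i \<ge> 0) \<and> (\<forall>i. y' $ i \<ge> 0))"

definition complexes :: "('s::finite) reaction set \<Rightarrow> 's complex set" where
  "complexes R = fst ` R \<union> snd ` R"

definition stoich_subspace :: "('s::finite) reaction set \<Rightarrow> 's complex set" where
  "stoich_subspace R = span ((\<lambda>(y, y'). y' - y) ` R)"

definition linkage_classes :: "('s::finite) reaction set \<Rightarrow> 's complex set set" where
  "linkage_classes R = complexes R // ((R \<union> R\<inverse>)\<^sup>*)"

definition n_minus_l :: "('s::finite) reaction set \<Rightarrow> int" where
  "n_minus_l R = int (card (complexes R)) - int (card (linkage_classes R))"

definition decomposition :: "('s::finite) reaction set \<Rightarrow> 's reaction set set \<Rightarrow> bool" where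
  "decomposition R P \<longleftrightarrow> \<Union>P = R \<and> {} \<notin> P
     \<and> (\<forall>A\<in>P. \<forall>B\<in>P. A \<noteq> B \<longrightarrow> A \<inter> B = {})"

definition independent_dec :: "('s::finite) reaction set \<Rightarrow> 's reaction set set \<Rightarrow> bool" where
  "independent_dec R P \<longleftrightarrow>
     stoich_subspace R = {(\<Sum>A\<in>P. v A) | v. \<forall>A\<in>P. v A \<in> stoich_subspace A}
   \<and> (\<forall>v. (\<forall>A\<in>P. v A \<in> stoich_subspace A) \<and> (\<Sum>A\<in>P. v A) = 0 \<longrightarrow> (\<forall>A\<in>P. v A = 0))"

definition incidence_independent_dec :: "('s::finite) reaction set \<Rightarrow> 's reaction set set \<Rightarrow> bool" where
  "incidence_independent_dec R P \<longleftrightarrow> n_minus_l R = (\<Sum>A\<in>P. n_minus_l A)"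

definition refines :: "'a set set \<Rightarrow> 'a set set \<Rightarrow> bool" where
  "refines Q P \<longleftrightarrow> (\<forall>B\<in>Q. \<exists>A\<in>P. B \<subseteq> A)"

definition finest_dec :: "(('s::finite) reaction set \<Rightarrow> 's reaction set set \<Rightarrow> bool)
    \<Rightarrow> 's reaction set \<Rightarrow> 's reaction set set \<Rightarrow> bool" where
  "finest_dec prop R P \<longleftrightarrow> decomposition R P \<and> prop R P
     \<and> \<not> (\<exists>Q. decomposition R Q \<and> prop R Q \<and> refines Q P \<and> Q \<noteq> P)"

end

theory Submission
  imports Defs
begin

text \<open>
  Both \<open>A \<mapsto> dim S\<^sub>A\<close> and \<open>A \<mapsto> n\<^sub>A - l\<^sub>A\<close> are submodular functions on sets of
  reactions vanishing at \<open>{}\<close>; the second is the rank function of the graphic matroid of the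
  reaction graph, since adding a reaction lowers the number of linkage classes by one or by
  zero according as its complexes were or were not linked already, and this gain can only
  shrink as the reaction set grows. Since \<open>S\<close> is always \<open>S\<^sub>1 + \<dots> + S\<^sub>k\<close>, a
  decomposition is independent, resp. incidence independent, exactly when the corresponding
  function \<open>f\<close> is additive on it: \<open>f R = \<Sum> f R\<^sub>i\<close>. For any such \<open>f\<close>, subadditivity
  makes additivity pass to coarsenings, and submodularity makes it pass to the common
  refinement of two additive partitions. Hence the additive decompositions are precisely the
  coarsenings of the finest one \<open>P\<close>, and these correspond to the set partitions of the set of
  blocks of \<open>P\<close>, of which there are \<open>Bell (card P)\<close>.
\<close>

section \<open>Set partitions and Bell numbers\<close>

lemma Bell_Suc_eq: "Bell (Suc m) = (\<Sum>j\<le>m. (m choose j) * Bell (m - j))"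
proof -
  have "Bell (Suc m) = (\<Sum>k\<in>{Suc 0..Suc m}. (m choose (k - 1)) * Bell (Suc m - k))"
    by simp
  also have "\<dots> = (\<Sum>j\<in>{0..m}. (m choose j) * Bell (m - j))"
    by (subst sum.shift_bounds_cl_Suc_ivl) simp
  finally show ?thesis
    by (simp add: atLeast0AtMost)
qed

lemma sum_Pow_card:
  fixes g :: "nat \<Rightarrow> 'b::comm_semiring_1"
  assumes "finite A"
  shows "(\<Sum>K\<in>Pow A. g (card K)) = (\<Sum>j\<le>card A. of_nat (card A choose j) * g j)"
proof -
  have "(\<Sum>K\<in>Pow A. g (card K)) = (\<Sum>j\<le>card A. \<Sum>K\<in>{K \<in> Pow A. card K = j}. g (card K))"
    by (rule sum.group[symmetric]) (use assms card_mono in auto)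
  also have "\<dots> = (\<Sum>j\<le>card A. of_nat (card A choose j) * g j)"
    by (simp add: n_subsets[OF assms])
  finally show ?thesis .
qed

lemma partition_on_remove_block:
  assumes "partition_on A P" "B \<in> P"
  shows "partition_on (A - B) (P - {B})" "B \<subseteq> A"
proof -
  have "P = insert B (P - {B})"
    using assms(2) by auto
  moreover have "disjnt B (\<Union>(P - {B}))"
    using assms by (auto simp: partition_on_def disjnt_def pairwise_def)
  ultimately show "partition_on (A - B) (P - {B})" "B \<subseteq> A"
    using assms(1) partition_on_insert by metis+
qed

lemma bij_betw_partition_on_insert:
  assumes "x \<notin> A"
  shows "bij_betw (\<lambda>(K, \<sigma>). insert (insert x K) \<sigma>)
           (SIGMA K:Pow A. {\<sigma>. partition_on (A - K) \<sigma>}) {P. partition_on (insert x A) P}"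
    (is "bij_betw ?f ?S _")
proof (rule bij_betwI')
  fix a b
  assume "a \<in> ?S" "b \<in> ?S"
  then obtain K \<sigma> K' \<sigma>' where ab: "a = (K, \<sigma>)" "b = (K', \<sigma>')" "K \<subseteq> A" "K' \<subseteq> A"
    and \<sigma>: "partition_on (A - K) \<sigma>" "partition_on (A - K') \<sigma>'"
    by auto
  have x\<sigma>: "x \<notin> \<Union>\<sigma>" "x \<notin> \<Union>\<sigma>'"
    using \<sigma> assms by (auto dest: partition_onD1)
  show "?f a = ?f b \<longleftrightarrow> a = b"
  proof
    assume "?f a = ?f b"
    then have eq: "insert (insert x K) \<sigma> = insert (insert x K') \<sigma>'"
      using ab by simp
    \<comment> \<open>the block containing \<open>x\<close> determines \<open>K\<close>, and the remaining blocks form \<open>\<sigma>\<close>\<close>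
    have new: "insert x K \<notin> \<sigma>" "insert x K' \<notin> \<sigma>'"
      using x\<sigma> by auto
    have "insert x K \<in> insert (insert x K') \<sigma>'"
      using eq by blast
    then have xK: "insert x K = insert x K'"
      using x\<sigma>(2) by auto
    then have "K = K'"
      using ab(3,4) assms by (metis Diff_insert_absorb subsetD)
    moreover have "\<sigma> = \<sigma>'"
      using eq new xK by (metis Diff_insert_absorb)
    ultimately show "a = b"
      using ab by simp
  qed simp
next
  fix a
  assume "a \<in> ?S"
  then obtain K \<sigma> where a: "a = (K, \<sigma>)" "K \<subseteq> A" "partition_on (A - K) \<sigma>"
    by auto
  then have "disjnt (insert x K) (\<Union>\<sigma>)"
    using assms by (auto simp: disjnt_def dest: partition_onD1)
  moreover have "insert x A - insert x K = A - K"
    using assms by auto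
  ultimately show "?f a \<in> {P. partition_on (insert x A) P}"
    using a by (auto simp: partition_on_insert)
next
  fix P
  assume "P \<in> {P. partition_on (insert x A) P}"
  then have P: "partition_on (insert x A) P"
    by simp
  then obtain B where B: "B \<in> P" "x \<in> B"
    by (auto simp: partition_on_def)
  have "insert x A - B = A - (B - {x})"
    using B assms by auto
  then have "(B - {x}, P - {B}) \<in> ?S"
    using partition_on_remove_block[OF P B(1)] by auto
  moreover have "P = ?f (B - {x}, P - {B})"
    using B by (auto simp: insert_absorb)
  ultimately show "\<exists>a\<in>?S. P = ?f a"
    by blast
qed

theorem card_partition_on:
  assumes "finite A"
  shows "card {P. partition_on A P} = Bell (card A)"
  using assms
proof (induction "card A" arbitrary: A rule: less_induct)
  case less
  show ?case
  proof (cases "A = {}")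
    case True
    then have "{P. partition_on A P} = {{}}"
      by (auto simp: partition_on_empty)
    then show ?thesis
      using True by simp
  next
    case False
    then obtain x where "x \<in> A"
      by blast
    then obtain A' where A: "A = insert x A'" "x \<notin> A'"
      by (meson mk_disjoint_insert)
    have "finite A'"
      using less.prems A by simp
    have "card {P. partition_on A P} = card (SIGMA K:Pow A'. {\<sigma>. partition_on (A' - K) \<sigma>})"
      using bij_betw_same_card[OF bij_betw_partition_on_insert[OF A(2)]] A(1) by simp
    also have "\<dots> = (\<Sum>K\<in>Pow A'. card {\<sigma>. partition_on (A' - K) \<sigma>})"
      using \<open>finite A'\<close> by (simp add: finitely_many_partition_on)
    also have "\<dots> = (\<Sum>K\<in>Pow A'. Bell (card A' - card K))"
    proof (rule sum.cong[OF refl])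
      fix K
      assume "K \<in> Pow A'"
      then have "finite K" "K \<subseteq> A'"
        using \<open>finite A'\<close> finite_subset by auto
      then have "card (A' - K) = card A' - card K"
        by (simp add: card_Diff_subset)
      moreover have "card (A' - K) < card A"
        using A \<open>finite A'\<close> card_mono[of A' "A' - K"] by auto
      ultimately show "card {\<sigma>. partition_on (A' - K) \<sigma>} = Bell (card A' - card K)"
        using less.hyps \<open>finite A'\<close> by simp
    qed
    also have "\<dots> = (\<Sum>j\<le>card A'. (card A' choose j) * Bell (card A' - j))"
      using sum_Pow_card[OF \<open>finite A'\<close>, of "\<lambda>j. Bell (card A' - j)"] by simp
    also have "\<dots> = Bell (Suc (card A'))"
      by (rule Bell_Suc_eq[symmetric])
    also have "\<dots> = Bell (card A)"
      using A \<open>finite A'\<close> by (simp del: Bell.simps)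
    finally show ?thesis .
  qed
qed

section \<open>Coarsenings and meets of partitions\<close>

definition blocks_in :: "'a set set \<Rightarrow> 'a set \<Rightarrow> 'a set set" where
  "blocks_in P Q = {A \<in> P. A \<subseteq> Q}"

lemma Union_blocks_in:
  assumes "partition_on E P" "partition_on E D" "refines P D" "Q \<in> D"
  shows "\<Union>(blocks_in P Q) = Q"
proof
  show "Q \<subseteq> \<Union>(blocks_in P Q)"
  proof
    fix x
    assume "x \<in> Q"
    then have "x \<in> \<Union>P"
      using assms(1,2,4) by (auto simp: partition_on_def)
    then obtain A where "A \<in> P" "x \<in> A"
      by blast
    moreover obtain Q' where "Q' \<in> D" "A \<subseteq> Q'"
      using \<open>A \<in> P\<close> assms(3) by (auto simp: refines_def)
    ultimately have "Q' = Q"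
      using \<open>x \<in> Q\<close> assms(4) partition_onD2[OF assms(2)] by (auto simp: disjoint_def)
    then show "x \<in> \<Union>(blocks_in P Q)"
      using \<open>A \<in> P\<close> \<open>x \<in> A\<close> \<open>A \<subseteq> Q'\<close> by (auto simp: blocks_in_def)
  qed
qed (auto simp: blocks_in_def)

lemma partition_on_blocks_in:
  assumes "partition_on E P" "partition_on E D" "refines P D"
  shows "partition_on P (blocks_in P ` D)"
proof (rule partition_onI)
  show "\<Union>(blocks_in P ` D) = P"
    using assms by (auto simp: blocks_in_def refines_def)
  show "{} \<notin> blocks_in P ` D"
  proof
    assume "{} \<in> blocks_in P ` D"
    then obtain Q where "Q \<in> D" "blocks_in P Q = {}"
      by auto
    then have "Q = {}"
      using Union_blocks_in[OF assms] by force
    then show False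
      using \<open>Q \<in> D\<close> partition_onD3[OF assms(2)] by simp
  qed
next
  fix X Y
  assume "X \<in> blocks_in P ` D" "Y \<in> blocks_in P ` D" "X \<noteq> Y"
  then obtain Q Q' where QQ': "Q \<in> D" "Q' \<in> D" "Q \<noteq> Q'" "X = blocks_in P Q" "Y = blocks_in P Q'"
    by auto
  then have "Q \<inter> Q' = {}"
    using partition_onD2[OF assms(2)] by (auto simp: disjoint_def)
  then have "\<not> (A \<subseteq> Q \<and> A \<subseteq> Q')" if "A \<in> P" for A
    using that partition_onD3[OF assms(1)] by (metis Int_greatest subset_empty)
  then show "disjnt X Y"
    using QQ' by (auto simp: blocks_in_def disjnt_def)
qed

lemma blocks_in_Union:
  assumes "partition_on E P" "X \<subseteq> P"
  shows "blocks_in P (\<Union>X) = X"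
proof -
  have "B \<in> X" if "B \<in> P" "B \<subseteq> \<Union>X" for B
  proof -
    have "B \<noteq> {}"
      using \<open>B \<in> P\<close> partition_onD3[OF assms(1)] by auto
    then obtain b where "b \<in> B"
      by blast
    then obtain B' where "B' \<in> X" "b \<in> B'"
      using \<open>B \<subseteq> \<Union>X\<close> by blast
    then have "B = B'"
      using \<open>b \<in> B\<close> \<open>B \<in> P\<close> assms partition_onD2[OF assms(1)] by (auto simp: disjoint_def)
    then show ?thesis
      using \<open>B' \<in> X\<close> by simp
  qed
  then show ?thesis
    using assms(2) by (auto simp: blocks_in_def)
qed

lemma partition_on_Union_image:
  assumes "partition_on E P" "partition_on P \<pi>"
  shows "partition_on E (Union ` \<pi>)"
proof (rule partition_onI)
  have "\<Union>(Union ` \<pi>) = \<Union>(\<Union>\<pi>)"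
    by blast
  then show "\<Union>(Union ` \<pi>) = E"
    using assms by (simp add: partition_on_def)
  show "{} \<notin> Union ` \<pi>"
  proof
    assume "{} \<in> Union ` \<pi>"
    then obtain X where "X \<in> \<pi>" "\<Union>X = {}"
      by auto
    moreover have "X \<noteq> {}" "X \<subseteq> P"
      using \<open>X \<in> \<pi>\<close> assms(2) by (auto simp: partition_on_def)
    ultimately show False
      using partition_onD3[OF assms(1)] by auto
  qed
next
  fix A B
  assume "A \<in> Union ` \<pi>" "B \<in> Union ` \<pi>" "A \<noteq> B"
  then obtain X Y where XY: "X \<in> \<pi>" "Y \<in> \<pi>" "X \<noteq> Y" "A = \<Union>X" "B = \<Union>Y"
    by auto
  then have "X \<inter> Y = {}" "X \<subseteq> P" "Y \<subseteq> P"
    using assms(2) by (auto simp: partition_on_def disjoint_def)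
  have "a \<inter> b = {}" if "a \<in> X" "b \<in> Y" for a b
  proof -
    have "a \<noteq> b"
      using that \<open>X \<inter> Y = {}\<close> by blast
    then show ?thesis
      using that \<open>X \<subseteq> P\<close> \<open>Y \<subseteq> P\<close> disjointD[OF partition_onD2[OF assms(1)]] by blast
  qed
  then show "disjnt A B"
    using XY by (auto simp: disjnt_def)
qed

lemma blocks_in_Union_image:
  assumes "partition_on E P" "partition_on P \<pi>"
  shows "blocks_in P ` Union ` \<pi> = \<pi>"
proof -
  have "blocks_in P (\<Union>X) = X" if "X \<in> \<pi>" for X
    using blocks_in_Union[OF assms(1)] that assms(2) by (auto simp: partition_on_def)
  then show ?thesis
    by (simp add: image_image)
qed

lemma Union_blocks_in_image:
  assumes "partition_on E P" "partition_on E D" "refines P D"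
  shows "Union ` blocks_in P ` D = D"
  using Union_blocks_in[OF assms] by (simp add: image_image)

lemma bij_betw_coarsenings:
  assumes "partition_on E P"
  shows "bij_betw (image Union) {\<pi>. partition_on P \<pi>} {D. partition_on E D \<and> refines P D}"
proof (rule bij_betw_byWitness[where f' = "image (blocks_in P)"])
  show "\<forall>\<pi>\<in>{\<pi>. partition_on P \<pi>}. blocks_in P ` Union ` \<pi> = \<pi>"
    using blocks_in_Union_image[OF assms] by simp
  show "\<forall>D\<in>{D. partition_on E D \<and> refines P D}. Union ` blocks_in P ` D = D"
    using Union_blocks_in_image[OF assms] by simp
  have "refines P (Union ` \<pi>)" if "partition_on P \<pi>" for \<pi>
    using that by (auto simp: refines_def partition_on_def)
  then show "image Union ` {\<pi>. partition_on P \<pi>} \<subseteq> {D. partition_on E D \<and> refines P D}"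
    using partition_on_Union_image[OF assms] by auto
  show "image (blocks_in P) ` {D. partition_on E D \<and> refines P D} \<subseteq> {\<pi>. partition_on P \<pi>}"
    using partition_on_blocks_in[OF assms] by auto
qed

lemma card_coarsenings:
  assumes "finite E" "partition_on E P"
  shows "card {D. partition_on E D \<and> refines P D} = Bell (card P)"
  using bij_betw_same_card[OF bij_betw_coarsenings[OF assms(2)]]
    card_partition_on[OF finite_elements[OF assms]] by simp

definition meet :: "'a set set \<Rightarrow> 'a set set \<Rightarrow> 'a set set" where
  "meet D1 D2 = {A \<inter> B | A B. A \<in> D1 \<and> B \<in> D2} - {{}}"

lemma partition_on_meet:
  assumes "partition_on E D1" "partition_on E D2"
  shows "partition_on E (meet D1 D2)"
proof (rule partition_onI)
  show "\<Union>(meet D1 D2) = E"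
  proof
    show "E \<subseteq> \<Union>(meet D1 D2)"
    proof
      fix x
      assume "x \<in> E"
      then have "x \<in> \<Union>D1" "x \<in> \<Union>D2"
        using assms by (simp_all add: partition_on_def)
      then obtain A B where "A \<in> D1" "B \<in> D2" "x \<in> A" "x \<in> B"
        by blast
      then show "x \<in> \<Union>(meet D1 D2)"
        by (auto simp: meet_def)
    qed
  qed (use assms in \<open>auto simp: meet_def partition_on_def\<close>)
  show "{} \<notin> meet D1 D2"
    by (simp add: meet_def)
next
  fix X Y
  assume "X \<in> meet D1 D2" "Y \<in> meet D1 D2" "X \<noteq> Y"
  then obtain A B A' B' where AB: "A \<in> D1" "B \<in> D2" "A' \<in> D1" "B' \<in> D2" "X = A \<inter> B" "Y = A' \<inter> B'"
    by (auto simp: meet_def)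
  then have "A \<noteq> A' \<or> B \<noteq> B'"
    using \<open>X \<noteq> Y\<close> by blast
  then have "A \<inter> A' = {} \<or> B \<inter> B' = {}"
    using AB disjointD[OF partition_onD2[OF assms(1)]] disjointD[OF partition_onD2[OF assms(2)]] by blast
  then show "disjnt X Y"
    using AB by (auto simp: disjnt_def)
qed

lemma refines_meet: "refines (meet D1 D2) D1" "refines (meet D1 D2) D2"
  by (auto simp: refines_def meet_def)

lemma card_partitions_with_finest:
  assumes "finite E" "partition_on E P" "\<Phi> P"
    and finest: "\<And>Q. partition_on E Q \<Longrightarrow> \<Phi> Q \<Longrightarrow> refines Q P \<Longrightarrow> Q = P"
    and coarsening_closed: "\<And>D D'. partition_on E D \<Longrightarrow> \<Phi> D \<Longrightarrow> partition_on E D' \<Longrightarrow> refines D D' \<Longrightarrow> \<Phi> D'"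
    and meet_closed: "\<And>D1 D2. partition_on E D1 \<Longrightarrow> partition_on E D2 \<Longrightarrow> \<Phi> D1 \<Longrightarrow> \<Phi> D2 \<Longrightarrow> \<Phi> (meet D1 D2)"
  shows "card {D. partition_on E D \<and> \<Phi> D} = Bell (card P)"
proof -
  have "partition_on E D \<and> \<Phi> D \<longleftrightarrow> partition_on E D \<and> refines P D" for D
  proof
    assume D: "partition_on E D \<and> \<Phi> D"
    have "meet P D = P"
      using assms(2,3) D by (intro finest partition_on_meet meet_closed refines_meet) auto
    then show "partition_on E D \<and> refines P D"
      using D refines_meet(2)[of P D] by simp
  next
    assume "partition_on E D \<and> refines P D"
    then show "partition_on E D \<and> \<Phi> D"
      using coarsening_closed[OF assms(2,3)] by simp
  qed
  then show ?thesis
    using card_coarsenings[OF assms(1,2)] by simp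
qed

lemma sum_over_coarsening:
  assumes "finite E" "partition_on E D" "partition_on E D'" "refines D D'"
  shows "(\<Sum>A\<in>D. g A) = (\<Sum>Q\<in>D'. \<Sum>A\<in>blocks_in D Q. g A)"
proof -
  have "inj_on (blocks_in D) D'"
    using Union_blocks_in[OF assms(2-4)] by (metis inj_on_inverseI)
  moreover have "(\<Sum>A\<in>D. g A) = (\<Sum>X\<in>blocks_in D ` D'. \<Sum>A\<in>X. g A)"
    using sum.partition[OF finite_elements[OF assms(1,2)] partition_on_blocks_in[OF assms(2-4)]] .
  ultimately show ?thesis
    by (simp add: sum.reindex)
qed

lemma blocks_in_meet:
  assumes "partition_on E D1" "partition_on E D2" "B \<in> D2"
  shows "blocks_in (meet D1 D2) B = (\<lambda>A. A \<inter> B) ` {A \<in> D1. A \<inter> B \<noteq> {}}"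
proof
  show "(\<lambda>A. A \<inter> B) ` {A \<in> D1. A \<inter> B \<noteq> {}} \<subseteq> blocks_in (meet D1 D2) B"
    using assms(3) by (auto simp: blocks_in_def meet_def)
  show "blocks_in (meet D1 D2) B \<subseteq> (\<lambda>A. A \<inter> B) ` {A \<in> D1. A \<inter> B \<noteq> {}}"
  proof
    fix C
    assume "C \<in> blocks_in (meet D1 D2) B"
    then obtain A B' where C: "A \<in> D1" "B' \<in> D2" "C = A \<inter> B'" "C \<noteq> {}" "C \<subseteq> B"
      by (auto simp: blocks_in_def meet_def)
    then have "B' = B"
      using assms(3) disjointD[OF partition_onD2[OF assms(2)]] by blast
    then show "C \<in> (\<lambda>A. A \<inter> B) ` {A \<in> D1. A \<inter> B \<noteq> {}}"
      using C by auto
  qed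
qed

section \<open>Submodular set functions and additive partitions\<close>

lemma submodular_of_diminishing_returns:
  fixes f :: "'a set \<Rightarrow> 'b::ordered_ab_group_add"
  assumes "finite E"
    and diminishing: "\<And>X Y e. X \<subseteq> Y \<Longrightarrow> Y \<subseteq> E \<Longrightarrow> e \<in> E \<Longrightarrow>
      f (insert e Y) - f Y \<le> f (insert e X) - f X"
    and "A \<subseteq> E" "B \<subseteq> E"
  shows "f (A \<union> B) + f (A \<inter> B) \<le> f A + f B"
proof -
  have "f (Y \<union> K) - f Y \<le> f (X \<union> K) - f X" if "X \<subseteq> Y" "Y \<subseteq> E" "K \<subseteq> E" for X Y K
    using finite_subset[OF \<open>K \<subseteq> E\<close> assms(1)] \<open>K \<subseteq> E\<close>
  proof (induction K rule: finite_induct)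
    case empty
    then show ?case
      by simp
  next
    case (insert e K)
    have "f (Y \<union> insert e K) - f Y = (f (insert e (Y \<union> K)) - f (Y \<union> K)) + (f (Y \<union> K) - f Y)"
      by simp
    also have "\<dots> \<le> (f (insert e (X \<union> K)) - f (X \<union> K)) + (f (X \<union> K) - f X)"
      using diminishing[of "X \<union> K" "Y \<union> K" e] insert.IH insert.prems that by (intro add_mono) auto
    also have "\<dots> = f (X \<union> insert e K) - f X"
      by simp
    finally show ?case .
  qed
  from this[of "A \<inter> B" B "A - B"]
  have "f (B \<union> (A - B)) - f B \<le> f ((A \<inter> B) \<union> (A - B)) - f (A \<inter> B)"
    using assms(3,4) by auto
  moreover have "B \<union> (A - B) = A \<union> B" "(A \<inter> B) \<union> (A - B) = A"
    by auto
  ultimately show ?thesis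
    by (simp add: algebra_simps)
qed

locale submodular_set_function =
  fixes E :: "'a set" and f :: "'a set \<Rightarrow> 'b::ordered_ab_group_add"
  assumes finite_ground: "finite E"
    and f_empty: "f {} = 0"
    and submodular: "A \<subseteq> E \<Longrightarrow> B \<subseteq> E \<Longrightarrow> f (A \<union> B) + f (A \<inter> B) \<le> f A + f B"
begin

definition additive :: "'a set set \<Rightarrow> bool" where
  "additive D \<longleftrightarrow> f E = (\<Sum>A\<in>D. f A)"

lemma subadditive:
  assumes "finite D" "\<Union>D \<subseteq> E" "disjoint D"
  shows "f (\<Union>D) \<le> (\<Sum>A\<in>D. f A)"
  using assms
proof (induction D rule: finite_induct)
  case empty
  then show ?case
    by (simp add: f_empty)
next
  case (insert X D)
  have "disjoint D"
    using insert.prems(2) by (simp add: pairwise_insert)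
  have "X \<inter> \<Union>D = {}"
    using insert.prems(2) insert.hyps(2) by (auto simp: pairwise_insert disjnt_def)
  have "f (\<Union>(insert X D)) \<le> f X + f (\<Union>D)"
    using submodular[of X "\<Union>D"] insert.prems(1) \<open>X \<inter> \<Union>D = {}\<close> by (simp add: f_empty)
  also have "\<dots> \<le> f X + (\<Sum>A\<in>D. f A)"
    using insert.IH insert.prems(1) \<open>disjoint D\<close> by (simp add: add_left_mono)
  finally show ?case
    using insert.hyps by simp
qed

lemma subadditive_partition:
  assumes "partition_on Z D" "Z \<subseteq> E"
  shows "f Z \<le> (\<Sum>A\<in>D. f A)"
  using subadditive[of D] assms finite_elements[OF finite_subset[OF assms(2) finite_ground]]
  by (simp add: partition_on_def)

lemma additive_coarsening:
  assumes "partition_on E D" "additive D" "partition_on E D'" "refines D D'"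
  shows "additive D'"
proof -
  have "f Q \<le> (\<Sum>A\<in>blocks_in D Q. f A)" if "Q \<in> D'" for Q
  proof -
    have "finite (blocks_in D Q)" "disjoint (blocks_in D Q)"
      using finite_elements[OF finite_ground assms(1)] partition_onD2[OF assms(1)]
      by (auto simp: blocks_in_def intro: pairwise_subset)
    then show ?thesis
      using subadditive[of "blocks_in D Q"] Union_blocks_in[OF assms(1,3,4) that] that assms(3)
      by (auto simp: partition_on_def)
  qed
  then have "(\<Sum>Q\<in>D'. f Q) \<le> (\<Sum>A\<in>D. f A)"
    unfolding sum_over_coarsening[OF finite_ground assms(1,3,4)] by (rule sum_mono)
  also have "\<dots> = f E"
    using assms(2) by (simp add: additive_def)
  finally show ?thesis
    using subadditive_partition[OF assms(3)] by (simp add: additive_def antisym)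
qed

lemma additive_split_off:
  assumes "partition_on E D" "additive D" "X \<in> D"
  shows "f E = f X + f (E - X)"
proof (rule antisym)
  have "X \<subseteq> E"
    using assms(1,3) by (auto simp: partition_on_def)
  then show "f E \<le> f X + f (E - X)"
    using submodular[of X "E - X"] by (simp add: Un_absorb1 f_empty)
  have "partition_on (E - X) (D - {X})"
    using assms(1,3) partition_on_insert[of X "D - {X}" E] partition_onD2[OF assms(1)]
    by (auto simp: insert_absorb disjnt_def disjoint_def)
  then have "f X + f (E - X) \<le> f X + (\<Sum>A\<in>D - {X}. f A)"
    using subadditive_partition by (simp add: add_left_mono)
  also have "\<dots> = f E"
    using assms(2,3) finite_elements[OF finite_ground assms(1)] by (simp add: additive_def sum.remove)
  finally show "f X + f (E - X) \<le> f E" .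
qed

lemma additive_restrict_block:
  assumes "partition_on E D" "additive D" "X \<in> D" "Z \<subseteq> E"
  shows "f (Z \<inter> X) + f (Z - X) \<le> f Z"
proof -
  have "X \<subseteq> E"
    using assms(1,3) by (auto simp: partition_on_def)
  have "(X \<union> Z) \<union> (E - X) = E" "(X \<union> Z) \<inter> (E - X) = Z - X"
    using \<open>X \<subseteq> E\<close> assms(4) by auto
  then have "f E + f (Z - X) \<le> f (X \<union> Z) + f (E - X)"
    using submodular[of "X \<union> Z" "E - X"] \<open>X \<subseteq> E\<close> assms(4) by simp
  moreover have "f (X \<union> Z) + f (X \<inter> Z) \<le> f X + f Z"
    using submodular[of X Z] \<open>X \<subseteq> E\<close> assms(4) by simp
  ultimately have "f E + f (Z - X) + (f (X \<union> Z) + f (X \<inter> Z)) \<le> f (X \<union> Z) + f (E - X) + (f X + f Z)"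
    by (rule add_mono)
  then show ?thesis
    using additive_split_off[OF assms(1-3)] by (simp add: algebra_simps Int_commute)
qed

lemma additive_restrict:
  assumes "partition_on E D" "additive D" "Z \<subseteq> E"
  shows "(\<Sum>A\<in>D. f (Z \<inter> A)) \<le> f Z"
proof -
  have "(\<Sum>A\<in>F. f (Z \<inter> A)) \<le> f (Z \<inter> \<Union>F)" if "F \<subseteq> D" for F
    using finite_subset[OF that finite_elements[OF finite_ground assms(1)]] that
  proof (induction F rule: finite_induct)
    case empty
    then show ?case
      by (simp add: f_empty)
  next
    case (insert X F)
    have "\<forall>B\<in>F. X \<inter> B = {}"
      using insert.prems insert.hyps(2) disjointD[OF partition_onD2[OF assms(1)]] by auto
    then have "Z \<inter> \<Union>(insert X F) - X = Z \<inter> \<Union>F"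
      by auto
    moreover have "Z \<inter> \<Union>(insert X F) \<subseteq> E"
      using assms(3) by auto
    ultimately have split: "f (Z \<inter> X) + f (Z \<inter> \<Union>F) \<le> f (Z \<inter> \<Union>(insert X F))"
      using additive_restrict_block[OF assms(1,2), of X "Z \<inter> \<Union>(insert X F)"] insert.prems
      by (simp add: Int_assoc)
    have "(\<Sum>A\<in>insert X F. f (Z \<inter> A)) = f (Z \<inter> X) + (\<Sum>A\<in>F. f (Z \<inter> A))"
      using insert.hyps by simp
    also have "\<dots> \<le> f (Z \<inter> X) + f (Z \<inter> \<Union>F)"
      using insert.IH insert.prems by (simp add: add_left_mono)
    also have "\<dots> \<le> f (Z \<inter> \<Union>(insert X F))"
      by (rule split)
    finally show ?case .
  qed
  from this[of D] show ?thesis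
    using assms(1,3) by (simp add: partition_on_def Int_absorb2)
qed

lemma additive_meet:
  assumes "partition_on E D1" "additive D1" "partition_on E D2" "additive D2"
  shows "additive (meet D1 D2)"
proof -
  have "(\<Sum>C\<in>blocks_in (meet D1 D2) B. f C) \<le> f B" if "B \<in> D2" for B
  proof -
    have "inj_on (\<lambda>A. A \<inter> B) {A \<in> D1. A \<inter> B \<noteq> {}}"
      using disjointD[OF partition_onD2[OF assms(1)]] by (auto intro!: inj_onI)
    then have "(\<Sum>C\<in>blocks_in (meet D1 D2) B. f C) = (\<Sum>A\<in>{A \<in> D1. A \<inter> B \<noteq> {}}. f (A \<inter> B))"
      by (simp add: blocks_in_meet[OF assms(1,3) that] sum.reindex)
    also have "\<dots> = (\<Sum>A\<in>D1. f (A \<inter> B))"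
      using finite_elements[OF finite_ground assms(1)]
      by (intro sum.mono_neutral_left) (auto simp: f_empty)
    also have "\<dots> \<le> f B"
      using additive_restrict[OF assms(1,2), of B] that assms(3)
      by (auto simp: partition_on_def Int_commute)
    finally show ?thesis .
  qed
  then have "(\<Sum>C\<in>meet D1 D2. f C) \<le> (\<Sum>B\<in>D2. f B)"
    unfolding sum_over_coarsening[OF finite_ground partition_on_meet[OF assms(1,3)] assms(3) refines_meet(2)]
    by (rule sum_mono)
  also have "\<dots> = f E"
    using assms(4) by (simp add: additive_def)
  finally show ?thesis
    using subadditive_partition[OF partition_on_meet[OF assms(1,3)]] by (simp add: additive_def antisym)
qed

theorem card_additive_partitions:
  assumes "partition_on E P" "additive P"
    and "\<And>Q. partition_on E Q \<Longrightarrow> additive Q \<Longrightarrow> refines Q P \<Longrightarrow> Q = P"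
  shows "card {D. partition_on E D \<and> additive D} = Bell (card P)"
  using card_partitions_with_finest[where \<Phi> = additive, OF finite_ground assms]
    additive_coarsening additive_meet by blast

end

section \<open>Direct sums of subspaces\<close>

lemma span_UN_eq_sums:
  fixes B :: "'i \<Rightarrow> 'v::real_vector set"
  assumes "finite I"
  shows "span (\<Union>i\<in>I. B i) = {\<Sum>i\<in>I. v i | v. \<forall>i\<in>I. v i \<in> span (B i)}"
  using assms
proof (induction I rule: finite_induct)
  case empty
  then show ?case
    by simp
next
  case (insert j I)
  have "span (\<Union>i\<in>insert j I. B i) = {x + y | x y. x \<in> span (B j) \<and> y \<in> span (\<Union>i\<in>I. B i)}"
    by (simp add: span_Un)
  also have "\<dots> = {\<Sum>i\<in>insert j I. v i | v. \<forall>i\<in>insert j I. v i \<in> span (B i)}"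
  proof (intro set_eqI iffI)
    fix z
    assume "z \<in> {x + y | x y. x \<in> span (B j) \<and> y \<in> span (\<Union>i\<in>I. B i)}"
    then obtain x y where "z = x + y" "x \<in> span (B j)" "y \<in> span (\<Union>i\<in>I. B i)"
      by blast
    moreover obtain v where "y = (\<Sum>i\<in>I. v i)" "\<forall>i\<in>I. v i \<in> span (B i)"
      using \<open>y \<in> span (\<Union>i\<in>I. B i)\<close> insert.IH by blast
    ultimately have "z = x + (\<Sum>i\<in>I. v i)" "x \<in> span (B j)" "\<forall>i\<in>I. v i \<in> span (B i)"
      by simp_all
    moreover have "(\<Sum>i\<in>I. (v(j := x)) i) = (\<Sum>i\<in>I. v i)"
      using insert.hyps(2) by (intro sum.cong) auto
    ultimately have "z = (\<Sum>i\<in>insert j I. (v(j := x)) i) \<and> (\<forall>i\<in>insert j I. (v(j := x)) i \<in> span (B i))"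
      using insert.hyps by simp
    then show "z \<in> {\<Sum>i\<in>insert j I. v i | v. \<forall>i\<in>insert j I. v i \<in> span (B i)}"
      by blast
  next
    fix z
    assume "z \<in> {\<Sum>i\<in>insert j I. v i | v. \<forall>i\<in>insert j I. v i \<in> span (B i)}"
    then obtain v where "z = v j + (\<Sum>i\<in>I. v i)" "\<forall>i\<in>insert j I. v i \<in> span (B i)"
      using insert.hyps by auto
    then show "z \<in> {x + y | x y. x \<in> span (B j) \<and> y \<in> span (\<Union>i\<in>I. B i)}"
      using insert.IH by blast
  qed
  finally show ?case .
qed

definition independent_subspaces :: "'i set \<Rightarrow> ('i \<Rightarrow> 'v::real_vector set) \<Rightarrow> bool" where
  "independent_subspaces I U \<longleftrightarrow>
     (\<forall>v. (\<forall>i\<in>I. v i \<in> U i) \<and> (\<Sum>i\<in>I. v i) = 0 \<longrightarrow> (\<forall>i\<in>I. v i = 0))"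

lemma independent_subspaces_subset:
  assumes "independent_subspaces J U" "I \<subseteq> J" "finite J" "\<And>i. i \<in> J \<Longrightarrow> 0 \<in> U i"
  shows "independent_subspaces I U"
  unfolding independent_subspaces_def
proof (intro allI impI ballI)
  fix v i
  assume v: "(\<forall>i\<in>I. v i \<in> U i) \<and> (\<Sum>i\<in>I. v i) = 0" and "i \<in> I"
  define w where "w k = (if k \<in> I then v k else 0)" for k
  have "\<forall>k\<in>J. w k \<in> U k"
    using v assms(4) by (simp add: w_def)
  moreover have "(\<Sum>k\<in>J. w k) = (\<Sum>k\<in>I. w k)"
    using assms(2,3) by (intro sum.mono_neutral_right) (auto simp: w_def)
  then have "(\<Sum>k\<in>J. w k) = 0"
    using v by (simp add: w_def)
  ultimately have "w i = 0"
    using assms(1,2) \<open>i \<in> I\<close> unfolding independent_subspaces_def by blast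
  then show "v i = 0"
    using \<open>i \<in> I\<close> by (simp add: w_def)
qed

lemma independent_subspaces_insert_Int:
  fixes U :: "'i \<Rightarrow> 'v::real_vector set"
  assumes "independent_subspaces (insert j I) U" "finite I" "j \<notin> I" "subspace (U j)"
  shows "U j \<inter> {\<Sum>i\<in>I. v i | v. \<forall>i\<in>I. v i \<in> U i} \<subseteq> {0}"
proof
  fix y
  assume "y \<in> U j \<inter> {\<Sum>i\<in>I. v i | v. \<forall>i\<in>I. v i \<in> U i}"
  then obtain v where v: "\<forall>i\<in>I. v i \<in> U i" "y = (\<Sum>i\<in>I. v i)" "y \<in> U j"
    by blast
  define w where "w = v(j := - y)"
  have "\<forall>i\<in>insert j I. w i \<in> U i"
    using v assms(3) subspace_neg[OF assms(4)] by (auto simp: w_def)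
  moreover have "(\<Sum>i\<in>I. w i) = y"
    using v(2) assms(3) by (auto simp: w_def intro: sum.cong)
  then have "(\<Sum>i\<in>insert j I. w i) = 0"
    using assms(2,3) by (simp add: w_def)
  ultimately have "w j = 0"
    using assms(1) unfolding independent_subspaces_def by blast
  then show "y \<in> {0}"
    by (simp add: w_def)
qed

lemma independent_subspaces_insertI:
  fixes U :: "'i \<Rightarrow> 'v::real_vector set"
  assumes "independent_subspaces I U" "U j \<inter> {\<Sum>i\<in>I. v i | v. \<forall>i\<in>I. v i \<in> U i} \<subseteq> {0}"
    and "finite I" "j \<notin> I" "subspace (U j)"
  shows "independent_subspaces (insert j I) U"
  unfolding independent_subspaces_def
proof (intro allI impI)
  fix v
  assume v: "(\<forall>i\<in>insert j I. v i \<in> U i) \<and> (\<Sum>i\<in>insert j I. v i) = 0"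
  then have "(\<Sum>i\<in>I. v i) = - v j"
    using assms(3,4) by (simp add: eq_neg_iff_add_eq_0 add.commute)
  then have "(\<Sum>i\<in>I. v i) \<in> U j"
    using v subspace_neg[OF assms(5)] by simp
  moreover have "(\<Sum>i\<in>I. v i) \<in> {\<Sum>i\<in>I. v i | v. \<forall>i\<in>I. v i \<in> U i}"
    using v by blast
  ultimately have "(\<Sum>i\<in>I. v i) = 0"
    using assms(2) by blast
  then show "\<forall>i\<in>insert j I. v i = 0"
    using assms(1,3,4) v by (simp add: independent_subspaces_def)
qed

lemma independent_subspaces_insert:
  fixes U :: "'i \<Rightarrow> 'v::real_vector set"
  assumes "finite I" "j \<notin> I" "\<And>i. subspace (U i)"
  shows "independent_subspaces (insert j I) U \<longleftrightarrow>
    independent_subspaces I U \<and> U j \<inter> {\<Sum>i\<in>I. v i | v. \<forall>i\<in>I. v i \<in> U i} \<subseteq> {0}"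
proof (intro iffI conjI)
  assume indep: "independent_subspaces (insert j I) U"
  show "independent_subspaces I U"
    using indep by (rule independent_subspaces_subset) (use assms subspace_0 in auto)
  show "U j \<inter> {\<Sum>i\<in>I. v i | v. \<forall>i\<in>I. v i \<in> U i} \<subseteq> {0}"
    by (rule independent_subspaces_insert_Int[OF indep assms(1,2,3)])
next
  assume "independent_subspaces I U \<and> U j \<inter> {\<Sum>i\<in>I. v i | v. \<forall>i\<in>I. v i \<in> U i} \<subseteq> {0}"
  then show "independent_subspaces (insert j I) U"
    using assms by (intro independent_subspaces_insertI) auto
qed

lemma independent_subspaces_span_iff_dim:
  fixes B :: "'i \<Rightarrow> 'v::euclidean_space set"
  assumes "finite I"
  shows "independent_subspaces I (\<lambda>i. span (B i)) \<longleftrightarrow> dim (\<Union>i\<in>I. B i) = (\<Sum>i\<in>I. dim (B i))"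
proof -
  have "dim (\<Union>i\<in>I. B i) \<le> (\<Sum>i\<in>I. dim (B i)) \<and>
    (independent_subspaces I (\<lambda>i. span (B i)) \<longleftrightarrow> dim (\<Union>i\<in>I. B i) = (\<Sum>i\<in>I. dim (B i)))"
    using assms
  proof (induction I rule: finite_induct)
    case empty
    then show ?case
      by (simp add: independent_subspaces_def)
  next
    case (insert j I)
    define W where "W = span (\<Union>i\<in>I. B i)"
    define d where "d = dim (span (B j) \<inter> W)"
    have span_insert: "span (\<Union>i\<in>insert j I. B i) = {x + y | x y. x \<in> span (B j) \<and> y \<in> W}"
      by (simp add: W_def span_Un)
    have "dim (\<Union>i\<in>insert j I. B i) + d = dim (span (\<Union>i\<in>insert j I. B i)) + dim (span (B j) \<inter> W)"
      by (simp add: d_def)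
    also have "\<dots> = dim (span (B j)) + dim W"
      unfolding span_insert W_def by (intro dim_sums_Int subspace_span)
    finally have dim_insert: "dim (\<Union>i\<in>insert j I. B i) + d = dim (B j) + dim (\<Union>i\<in>I. B i)"
      by (simp add: W_def)
    have indep_insert: "independent_subspaces (insert j I) (\<lambda>i. span (B i)) \<longleftrightarrow>
      independent_subspaces I (\<lambda>i. span (B i)) \<and> d = 0"
      using independent_subspaces_insert[OF insert.hyps subspace_span, of B]
      by (simp add: W_def d_def span_UN_eq_sums[OF insert.hyps(1)])
    have sum_insert: "(\<Sum>i\<in>insert j I. dim (B i)) = dim (B j) + (\<Sum>i\<in>I. dim (B i))"
      using insert.hyps by simp
    have le: "dim (\<Union>i\<in>I. B i) \<le> (\<Sum>i\<in>I. dim (B i))"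
      using insert.IH by simp
    have "dim (\<Union>i\<in>insert j I. B i) = (\<Sum>i\<in>insert j I. dim (B i)) \<longleftrightarrow>
      dim (\<Union>i\<in>I. B i) = (\<Sum>i\<in>I. dim (B i)) \<and> d = 0"
      using dim_insert le unfolding sum_insert by linarith
    then show ?case
      using dim_insert le indep_insert insert.IH unfolding sum_insert by simp
  qed
  then show ?thesis
    by blast
qed

lemma dim_image_submodular:
  fixes g :: "'a \<Rightarrow> 'v::euclidean_space"
  shows "dim (g ` (A \<union> B)) + dim (g ` (A \<inter> B)) \<le> dim (g ` A) + dim (g ` B)"
proof -
  have "dim (g ` (A \<inter> B)) \<le> dim (span (g ` A) \<inter> span (g ` B))"
    by (intro dim_subset) (auto intro: span_base)
  moreover have "dim (g ` (A \<union> B)) + dim (span (g ` A) \<inter> span (g ` B)) = dim (g ` A) + dim (g ` B)"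
    using dim_sums_Int[OF subspace_span subspace_span, of "g ` A" "g ` B"]
    by (simp add: image_Un span_Un flip: dim_span[of "g ` A \<union> g ` B"])
  ultimately show ?thesis
    by linarith
qed

section \<open>Linkage classes\<close>

definition linked :: "('a \<times> 'a) set \<Rightarrow> ('a \<times> 'a) set" where
  "linked X = (X \<union> X\<inverse>)\<^sup>*"

lemma equiv_linked: "equiv UNIV (linked X)"
  unfolding linked_def by (intro equivI refl_rtrancl sym_rtrancl trans_rtrancl sym_Un_converse) simp

lemma linked_mono: "X \<subseteq> Y \<Longrightarrow> linked X \<subseteq> linked Y"
  unfolding linked_def by (intro rtrancl_mono) auto

lemma linked_insert:
  "linked (insert (u, v) X) = linked X \<union>
     {(a, b). (a, u) \<in> linked X \<and> (v, b) \<in> linked X \<or> (a, v) \<in> linked X \<and> (u, b) \<in> linked X}"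
proof -
  have "linked (insert (u, v) X) = (insert (u, v) (insert (v, u) (X \<union> X\<inverse>)))\<^sup>*"
    unfolding linked_def by (rule arg_cong[where f = rtrancl]) auto
  then show ?thesis
    unfolding rtrancl_insert by (auto simp: linked_def intro: rtrancl_trans)
qed

lemma linked_insert_linked: "(u, v) \<in> linked X \<Longrightarrow> linked (insert (u, v) X) = linked X"
  using equiv_linked[of X] unfolding linked_insert equiv_def sym_def trans_def by blast

lemma linked_iff_Image_eq: "(x, y) \<in> linked X \<longleftrightarrow> linked X``{x} = linked X``{y}"
  using equiv_class_eq_iff[OF equiv_linked, of x y X] by blast

lemma quotient_eq_image: "A // r = (\<lambda>x. r``{x}) ` A"
  by (auto simp: quotient_def)

lemma Image_linked_insert:
  assumes "(u, v) \<notin> linked X"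
  shows "linked (insert (u, v) X)``{x} =
    (if linked X``{x} \<in> {linked X``{u}, linked X``{v}} then linked X``{u} \<union> linked X``{v}
     else linked X``{x})"
proof -
  let ?r = "linked X"
  define cu cv where "cu = ?r``{u}" and "cv = ?r``{v}"
  have "cu \<noteq> cv"
    using assms by (simp add: linked_iff_Image_eq cu_def cv_def)
  have "linked (insert (u, v) X)``{x} =
    ?r``{x} \<union> (if (x, u) \<in> ?r then cv else {}) \<union> (if (x, v) \<in> ?r then cu else {})"
    unfolding linked_insert cu_def cv_def by auto
  then have "linked (insert (u, v) X)``{x} = (if ?r``{x} \<in> {cu, cv} then cu \<union> cv else ?r``{x})"
    using \<open>cu \<noteq> cv\<close> by (auto simp: linked_iff_Image_eq cu_def cv_def)
  then show ?thesis
    by (simp add: cu_def cv_def)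
qed

lemma card_quotient_linked_insert:
  assumes "finite V" "u \<in> V" "v \<in> V" "(u, v) \<notin> linked X"
  shows "card (V // linked X) = Suc (card (V // linked (insert (u, v) X)))"
proof -
  let ?r = "linked X"
  define cu cv where "cu = ?r``{u}" and "cv = ?r``{v}"
  define merge where "merge C = (if C \<in> {cu, cv} then cu \<union> cv else C)" for C
  define S where "S = V // ?r - {cu, cv}"
  have "cu \<noteq> cv"
    using assms(4) by (simp add: linked_iff_Image_eq cu_def cv_def)
  have quot: "V // ?r = insert cu (insert cv S)"
    using assms(2,3) by (auto simp: S_def cu_def cv_def quotient_def)
  have "linked (insert (u, v) X)``{x} = merge (?r``{x})" for x
    using Image_linked_insert[OF assms(4)] by (simp add: merge_def cu_def cv_def)
  then have "V // linked (insert (u, v) X) = merge ` (V // ?r)"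
    by (simp add: quotient_eq_image image_image)
  also have "\<dots> = insert (cu \<union> cv) S"
  proof -
    have "merge ` S = S"
      by (auto simp: merge_def S_def)
    then show ?thesis
      by (simp add: quot merge_def)
  qed
  finally have quot': "V // linked (insert (u, v) X) = insert (cu \<union> cv) S" .
  have "cu \<union> cv \<notin> S"
  proof
    assume "cu \<union> cv \<in> S"
    then obtain x where x: "cu \<union> cv = ?r``{x}" "?r``{x} \<noteq> cu" "?r``{x} \<noteq> cv"
      by (auto simp: S_def quotient_eq_image)
    have "x \<in> ?r``{x}"
      using equiv_class_self[OF equiv_linked] by simp
    then have "x \<in> cu \<or> x \<in> cv"
      using x(1) by blast
    then show False
      using x(2,3) by (auto simp: linked_iff_Image_eq cu_def cv_def)
  qed
  moreover have "cu \<notin> S" "cv \<notin> S" "finite S"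
    using assms(1) by (simp_all add: S_def quotient_eq_image)
  ultimately show ?thesis
    using quot quot' \<open>cu \<noteq> cv\<close> by simp
qed

lemma card_quotient_linked:
  assumes "finite V" "Field X \<subseteq> V"
  shows "card (V // linked X) = card (Field X // linked X) + card (V - Field X)"
proof -
  have "Domain (X \<union> X\<inverse>) = Field X"
    by (auto simp: Field_def)
  then have isolated: "linked X``{x} = {x}" if "x \<notin> Field X" for x
    using that Not_Domain_rtrancl[of x "X \<union> X\<inverse>"] by (auto simp: linked_def)
  have "V // linked X = (Field X \<union> (V - Field X)) // linked X"
    using assms(2) by (simp add: Un_absorb1)
  also have "\<dots> = Field X // linked X \<union> (V - Field X) // linked X"
    by (simp only: quotient_def UN_Un)
  also have "(V - Field X) // linked X = (\<lambda>x. {x}) ` (V - Field X)"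
    using isolated by (auto simp: quotient_def)
  finally have "V // linked X = Field X // linked X \<union> (\<lambda>x. {x}) ` (V - Field X)" .
  moreover have "linked X``{y} \<noteq> {x}" if "y \<in> Field X" "x \<notin> Field X" for x y
    using that equiv_class_self[OF equiv_linked, of y X] by auto
  then have "Field X // linked X \<inter> (\<lambda>x. {x}) ` (V - Field X) = {}"
    by (auto simp: quotient_def)
  moreover have "finite (Field X // linked X)"
    using assms finite_subset by (auto simp: quotient_def)
  ultimately show ?thesis
    using assms(1) by (simp add: card_Un_disjoint card_image)
qed

section \<open>Decompositions of a reaction network\<close>

lemma decomposition_iff_partition_on: "decomposition R D \<longleftrightarrow> partition_on R D"
  by (auto simp: decomposition_def partition_on_def disjoint_def)

lemma card_decompositions_eq_Bell:
  assumes "submodular_set_function R f"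
    and "\<And>D. decomposition R D \<Longrightarrow> \<Phi> R D \<longleftrightarrow> f R = (\<Sum>A\<in>D. f A)"
    and "finest_dec \<Phi> R P"
  shows "card {D. decomposition R D \<and> \<Phi> R D} = Bell (card P)"
proof -
  interpret submodular_set_function R f
    by fact
  have "{D. decomposition R D \<and> \<Phi> R D} = {D. partition_on R D \<and> additive D}"
    using assms(2) by (auto simp: decomposition_iff_partition_on additive_def)
  moreover have "partition_on R P" "additive P"
    "\<And>Q. partition_on R Q \<Longrightarrow> additive Q \<Longrightarrow> refines Q P \<Longrightarrow> Q = P"
    using assms(2,3) by (auto simp: finest_dec_def decomposition_iff_partition_on additive_def)
  ultimately show ?thesis
    using card_additive_partitions by simp
qed

definition reaction_vector :: "('s::finite) reaction \<Rightarrow> 's complex" where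
  "reaction_vector = (\<lambda>(y, y'). y' - y)"

lemma stoich_subspace_eq: "stoich_subspace = (\<lambda>A. span (reaction_vector ` A))"
  by (simp add: stoich_subspace_def reaction_vector_def fun_eq_iff)

lemma independent_dec_iff_dim:
  assumes "finite R" "partition_on R D"
  shows "independent_dec R D \<longleftrightarrow> dim (stoich_subspace R) = (\<Sum>A\<in>D. dim (stoich_subspace A))"
proof -
  have "finite D"
    using assms by (rule finite_elements)
  have R: "reaction_vector ` R = (\<Union>A\<in>D. reaction_vector ` A)"
    using partition_onD1[OF assms(2)] by auto
  \<comment> \<open>the first half of the definition, \<open>S = S\<^sub>1 + \<dots> + S\<^sub>k\<close>, holds for every decomposition\<close>
  have "stoich_subspace R = {\<Sum>A\<in>D. v A | v. \<forall>A\<in>D. v A \<in> stoich_subspace A}"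
    unfolding stoich_subspace_eq R by (rule span_UN_eq_sums[OF \<open>finite D\<close>])
  then have "independent_dec R D \<longleftrightarrow> independent_subspaces D stoich_subspace"
    by (simp add: independent_dec_def independent_subspaces_def)
  also have "\<dots> \<longleftrightarrow> dim (stoich_subspace R) = (\<Sum>A\<in>D. dim (stoich_subspace A))"
    using independent_subspaces_span_iff_dim[OF \<open>finite D\<close>, of "\<lambda>A. reaction_vector ` A"]
    by (simp add: stoich_subspace_eq R)
  finally show ?thesis .
qed

lemma submodular_stoich_dim:
  "finite R \<Longrightarrow> submodular_set_function R (\<lambda>A. int (dim (stoich_subspace A)))"
  by unfold_locales
    (simp_all add: stoich_subspace_eq flip: of_nat_add, rule dim_image_submodular)

lemma complexes_eq_Field: "complexes R = Field R"
  by (auto simp: complexes_def Field_def Domain_fst Range_snd)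

lemma n_minus_l_eq_card_quotient:
  assumes "finite V" "complexes A \<subseteq> V"
  shows "n_minus_l A = int (card V) - int (card (V // linked A))"
proof -
  have "card V = card (Field A) + card (V - Field A)"
    using assms by (simp add: complexes_eq_Field card_Diff_subset card_mono finite_subset)
  moreover have "card (V // linked A) = card (Field A // linked A) + card (V - Field A)"
    using assms by (simp add: complexes_eq_Field card_quotient_linked)
  ultimately show ?thesis
    by (simp add: n_minus_l_def linkage_classes_def complexes_eq_Field linked_def)
qed

lemma n_minus_l_submodular:
  assumes "finite R" "A \<subseteq> R" "B \<subseteq> R"
  shows "n_minus_l (A \<union> B) + n_minus_l (A \<inter> B) \<le> n_minus_l A + n_minus_l B"
proof (rule submodular_of_diminishing_returns[OF assms(1) _ assms(2,3)])
  fix X Y e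
  assume "X \<subseteq> Y" "Y \<subseteq> R" "e \<in> R"
  obtain u v where e: "e = (u, v)" "u \<in> complexes R" "v \<in> complexes R"
    using \<open>e \<in> R\<close> by (cases e) (force simp: complexes_def)
  have "finite (complexes R)"
    using assms(1) by (simp add: complexes_def)
  have gain: "n_minus_l (insert e Z) - n_minus_l Z = (if (u, v) \<in> linked Z then 0 else 1)"
    if "Z \<subseteq> R" for Z
  proof -
    have "complexes (insert e Z) \<subseteq> complexes R" "complexes Z \<subseteq> complexes R"
      using that \<open>e \<in> R\<close> by (auto simp: complexes_def)
    then show ?thesis
      using n_minus_l_eq_card_quotient[OF \<open>finite (complexes R)\<close>] e
        card_quotient_linked_insert[OF \<open>finite (complexes R)\<close> e(2,3), of Z]
      by (simp add: linked_insert_linked)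
  qed
  show "n_minus_l (insert e Y) - n_minus_l Y \<le> n_minus_l (insert e X) - n_minus_l X"
    using gain[of X] gain[of Y] \<open>X \<subseteq> Y\<close> \<open>Y \<subseteq> R\<close> linked_mono[OF \<open>X \<subseteq> Y\<close>] by auto
qed

lemma submodular_n_minus_l:
  assumes "finite R"
  shows "submodular_set_function R n_minus_l"
proof
  show "n_minus_l {} = 0"
    by (simp add: n_minus_l_def linkage_classes_def complexes_def)
qed (use assms n_minus_l_submodular in auto)

theorem mainTheorem3:
  fixes R :: "('s::finite) reaction set"
    and P Q :: "'s reaction set set"
  assumes "is_crn R"
    and "finest_dec independent_dec R P" and "card P = p" and "p \<ge> 2"
    and "finest_dec incidence_independent_dec R Q" and "card Q = q" and "q \<ge> 2"
  shows "card {D. decomposition R D \<and> independent_dec R D} = Bell p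
       \<and> card {D. decomposition R D \<and> incidence_independent_dec R D} = Bell q"
proof -
  have "finite R"
    using assms(1) by (simp add: is_crn_def)
  have "card {D. decomposition R D \<and> independent_dec R D} = Bell (card P)"
  proof (rule card_decompositions_eq_Bell[OF submodular_stoich_dim[OF \<open>finite R\<close>] _ assms(2)])
    fix D
    assume "decomposition R D"
    then show "independent_dec R D \<longleftrightarrow>
      int (dim (stoich_subspace R)) = (\<Sum>A\<in>D. int (dim (stoich_subspace A)))"
      using independent_dec_iff_dim[OF \<open>finite R\<close>]
      by (simp add: decomposition_iff_partition_on flip: of_nat_sum)
  qed
  moreover have "card {D. decomposition R D \<and> incidence_independent_dec R D} = Bell (card Q)"
    by (rule card_decompositions_eq_Bell[OF submodular_n_minus_l[OF \<open>finite R\<close>] _ assms(5)])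
      (simp add: incidence_independent_dec_def)
  ultimately show ?thesis
    using assms(3,6) by simp
qed

end
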